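(* Let $G=(V,E)$ be a connected graph with $n$ vertices, let $\mathscr{S}$ be a block system for $G$ with $V\notin\mathscr{S}$, and let $\psi$ be a probability distribution on $\mathscr{S}$ such that $\psi(v)>0$ for every $v\in V$. Fix $\lambda>1$. If $$q\ge(2s)^{s+1}\,\partial^+\,\Psi\,\lambda^{\mu^+},$$ then for every $\varepsilon>0$ the $(\mathscr{S},\psi)$-block dynamics satisfies $\tau(\mathcal{M}_{\mathrm{BD}}^{\mathscr{S},\psi}(G,\lambda,q),\varepsilon)\le 2\psi_{\min}^{-1}\log(n\varepsilon^{-1})$.
   Context: Potts model on $G=(V,E)$: configurations $\sigma\in\Omega=[q]^V$, $\mu(\sigma)$ = number of monochromatic edges, Gibbs distribution $\pi(\sigma)\propto\lambda^{\mu(\sigma)}$. $\tau(\mathcal{M},\varepsilon)=\max_x\min\{t:\|P^t(x,\cdot)-\pi\|_{TV}\le\varepsilon\}$. A block system for $G$ is a collection $\mathscr{S}$ of subsets of $V$ (blocks) whose union is $V$. For $S\subseteq V$, $X\in\Omega$ and $c\in[q]^S$, $X^{(S,c)}$ is the configuration equal to $c$ on $S$ and to $X$ off $S$; $\mu_{X,S}(c)$ is the number of monochromatic edges of $X^{(S,c)}$ incident with at least one vertex of $S$. Given a distribution $\psi$ on $\mathscr{S}$, the $(\mathscr{S},\psi)$-block dynamics $\mathcal{M}_{\mathrm{BD}}^{\mathscr{S},\psi}(G,\lambda,q)$ is the chain on $\Omega$ which from $X_t$ picks $S\in\mathscr{S}$ according to $\psi$, picks $c\in[q]^S$ with probability proportional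 to $\lambda^{\mu_{X_t,S}(c)}$, and moves to $X_t^{(S,c)}$. Parameters: $\partial S$ is the set of vertices of $V\setminus S$ having a neighbour in $S$; $s=\max_{S\in\mathscr{S}}|S|$; $\partial^+=\max_{S\in\mathscr{S}}|\partial S|^{\min\{|S|,|\partial S|\}}$; for a $\psi$-random block $\vec S$, $\psi(v)=\mathbb{P}(v\in\vec S)$, $\psi_\partial(v)=\mathbb{P}(v\in\partial\vec S)$, $\psi_{\min}=\min_v\psi(v)$, $\Psi=\max_{v\in V}\psi_\partial(v)/\psi(v)$. A colour used by $c\in[q]^S$ is free with respect to $X,S$ if it does not occur among $\{X(u):u\in\partial S\}$; $f(X,S,c)$ is the number of free colours used by $c$. For an integer $f\ge0$, $\mu^+_{X,S,f}=\max\{\mu_{X,S}(c)/(|S|-f): c\in[q]^S,\ f(X,S,c)=f\}$ (a maximum over the empty set is $0$), and $\mu^+=\max_{S\in\mathscr{S}}\max_{X\in\Omega}\max_{f\in\{0,\dots,|S|-1\}}\mu^+_{X,S,f}$. *)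

theory Defs
  imports Complex_Main "HOL-Library.FuncSet"
begin

definition simple_graph :: "'v set \<Rightarrow> ('v \<Rightarrow> 'v \<Rightarrow> bool) \<Rightarrow> bool" where
  "simple_graph V E \<longleftrightarrow> finite V \<and> (\<forall>u v. E u v \<longrightarrow> u \<in> V \<and> v \<in> V \<and> E v u \<and> u \<noteq> v)"

definition connected_graph :: "'v set \<Rightarrow> ('v \<Rightarrow> 'v \<Rightarrow> bool) \<Rightarrow> bool" where
  "connected_graph V E \<longleftrightarrow> V \<noteq> {} \<and> (\<forall>u\<in>V. \<forall>v\<in>V. E\<^sup>*\<^sup>* u v)"

definition edges :: "'v set \<Rightarrow> ('v \<Rightarrow> 'v \<Rightarrow> bool) \<Rightarrow> 'v set set" where
  "edges V E = {{u, v} | u v. u \<in> V \<and> v \<in> V \<and> E u v}"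

definition configs :: "'v set \<Rightarrow> nat \<Rightarrow> ('v \<Rightarrow> nat) set" where
  "configs V q = PiE V (\<lambda>_. {..<q})"

definition monochromatic :: "('v \<Rightarrow> 'v \<Rightarrow> bool) \<Rightarrow> ('v \<Rightarrow> nat) \<Rightarrow> 'v set \<Rightarrow> bool" where
  "monochromatic E \<sigma> e \<longleftrightarrow> (\<exists>u v. e = {u, v} \<and> E u v \<and> \<sigma> u = \<sigma> v)"

definition mono_count :: "'v set \<Rightarrow> ('v \<Rightarrow> 'v \<Rightarrow> bool) \<Rightarrow> ('v \<Rightarrow> nat) \<Rightarrow> nat" where
  "mono_count V E \<sigma> = card {e \<in> edges V E. monochromatic E \<sigma> e}"

definition gibbs :: "'v set \<Rightarrow> ('v \<Rightarrow> 'v \<Rightarrow> bool) \<Rightarrow> nat \<Rightarrow> real \<Rightarrow> ('v \<Rightarrow> nat) \<Rightarrow> real" where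
  "gibbs V E q lam \<sigma> = lam ^ mono_count V E \<sigma> / (\<Sum>\<tau>\<in>configs V q. lam ^ mono_count V E \<tau>)"

definition upd_conf :: "('v \<Rightarrow> nat) \<Rightarrow> 'v set \<Rightarrow> ('v \<Rightarrow> nat) \<Rightarrow> ('v \<Rightarrow> nat)" where
  "upd_conf X S c = (\<lambda>v. if v \<in> S then c v else X v)"

definition mu_block :: "'v set \<Rightarrow> ('v \<Rightarrow> 'v \<Rightarrow> bool) \<Rightarrow> ('v \<Rightarrow> nat) \<Rightarrow> 'v set \<Rightarrow> ('v \<Rightarrow> nat) \<Rightarrow> nat" where
  "mu_block V E X S c = card {e \<in> edges V E. monochromatic E (upd_conf X S c) e \<and> e \<inter> S \<noteq> {}}"

definition boundary :: "'v set \<Rightarrow> ('v \<Rightarrow> 'v \<Rightarrow> bool) \<Rightarrow> 'v set \<Rightarrow> 'v set" where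
  "boundary V E S = {u \<in> V - S. \<exists>v\<in>S. E u v}"

definition block_system :: "'v set \<Rightarrow> 'v set set \<Rightarrow> bool" where
  "block_system V \<S> \<longleftrightarrow> (\<forall>S\<in>\<S>. S \<subseteq> V) \<and> \<Union>\<S> = V"

definition prob_on :: "'v set set \<Rightarrow> ('v set \<Rightarrow> real) \<Rightarrow> bool" where
  "prob_on \<S> \<psi> \<longleftrightarrow> finite \<S> \<and> (\<forall>S\<in>\<S>. \<psi> S \<ge> 0) \<and> (\<Sum>S\<in>\<S>. \<psi> S) = 1"

definition block_dyn :: "'v set \<Rightarrow> ('v \<Rightarrow> 'v \<Rightarrow> bool) \<Rightarrow> nat \<Rightarrow> real \<Rightarrow> 'v set set \<Rightarrow> ('v set \<Rightarrow> real)
    \<Rightarrow> ('v \<Rightarrow> nat) \<Rightarrow> ('v \<Rightarrow> nat) \<Rightarrow> real" where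
  "block_dyn V E q lam \<S> \<psi> X Y =
     (\<Sum>S\<in>\<S>. \<psi> S *
        (\<Sum>c\<in>PiE S (\<lambda>_. {..<q}).
           if upd_conf X S c = Y
           then lam ^ mu_block V E X S c / (\<Sum>c'\<in>PiE S (\<lambda>_. {..<q}). lam ^ mu_block V E X S c')
           else 0))"

fun mat_pow :: "'a set \<Rightarrow> ('a \<Rightarrow> 'a \<Rightarrow> real) \<Rightarrow> nat \<Rightarrow> 'a \<Rightarrow> 'a \<Rightarrow> real" where
  "mat_pow Om P 0 x y = (if x = y then 1 else 0)"
| "mat_pow Om P (Suc t) x y = (\<Sum>z\<in>Om. mat_pow Om P t x z * P z y)"

definition tv_dist :: "'a set \<Rightarrow> ('a \<Rightarrow> real) \<Rightarrow> ('a \<Rightarrow> real) \<Rightarrow> real" where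
  "tv_dist Om p r = (\<Sum>y\<in>Om. \<bar>p y - r y\<bar>) / 2"

text \<open>Mixing time: max over x of min {t. TV(P^t(x,.), pi) <= eps} (well defined
  when each of these sets is nonempty).\<close>
definition mixing_time :: "'a set \<Rightarrow> ('a \<Rightarrow> 'a \<Rightarrow> real) \<Rightarrow> ('a \<Rightarrow> real) \<Rightarrow> real \<Rightarrow> nat" where
  "mixing_time Om P \<pi> eps = Max ((\<lambda>x. LEAST t. tv_dist Om (mat_pow Om P t x) \<pi> \<le> eps) ` Om)"

definition psi_v :: "'v set set \<Rightarrow> ('v set \<Rightarrow> real) \<Rightarrow> 'v \<Rightarrow> real" where
  "psi_v \<S> \<psi> v = (\<Sum>S\<in>{S\<in>\<S>. v \<in> S}. \<psi> S)"

definition psi_bd :: "'v set \<Rightarrow> ('v \<Rightarrow> 'v \<Rightarrow> bool) \<Rightarrow> 'v set set \<Rightarrow> ('v set \<Rightarrow> real) \<Rightarrow> 'v \<Rightarrow> real" where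
  "psi_bd V E \<S> \<psi> v = (\<Sum>S\<in>{S\<in>\<S>. v \<in> boundary V E S}. \<psi> S)"

definition psi_min :: "'v set \<Rightarrow> 'v set set \<Rightarrow> ('v set \<Rightarrow> real) \<Rightarrow> real" where
  "psi_min V \<S> \<psi> = Min (psi_v \<S> \<psi> ` V)"

definition Psi_ratio :: "'v set \<Rightarrow> ('v \<Rightarrow> 'v \<Rightarrow> bool) \<Rightarrow> 'v set set \<Rightarrow> ('v set \<Rightarrow> real) \<Rightarrow> real" where
  "Psi_ratio V E \<S> \<psi> = Max ((\<lambda>v. psi_bd V E \<S> \<psi> v / psi_v \<S> \<psi> v) ` V)"

definition max_block :: "'v set set \<Rightarrow> nat" where
  "max_block \<S> = Max (card ` \<S>)"

definition bd_plus :: "'v set \<Rightarrow> ('v \<Rightarrow> 'v \<Rightarrow> bool) \<Rightarrow> 'v set set \<Rightarrow> nat" where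
  "bd_plus V E \<S> = Max ((\<lambda>S. card (boundary V E S) ^ min (card S) (card (boundary V E S))) ` \<S>)"

definition free_count :: "'v set \<Rightarrow> ('v \<Rightarrow> 'v \<Rightarrow> bool) \<Rightarrow> ('v \<Rightarrow> nat) \<Rightarrow> 'v set \<Rightarrow> ('v \<Rightarrow> nat) \<Rightarrow> nat" where
  "free_count V E X S c = card (c ` S - X ` boundary V E S)"

text \<open>mu^+_{X,S,f}; maximum over the empty set is 0 (all values are nonnegative).\<close>
definition mu_plus_XSf :: "'v set \<Rightarrow> ('v \<Rightarrow> 'v \<Rightarrow> bool) \<Rightarrow> nat \<Rightarrow> ('v \<Rightarrow> nat) \<Rightarrow> 'v set \<Rightarrow> nat \<Rightarrow> real" where
  "mu_plus_XSf V E q X S f =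
     (let A = {real (mu_block V E X S c) / real (card S - f) | c.
                c \<in> PiE S (\<lambda>_. {..<q}) \<and> free_count V E X S c = f}
      in if A = {} then 0 else Max A)"

definition mu_plus :: "'v set \<Rightarrow> ('v \<Rightarrow> 'v \<Rightarrow> bool) \<Rightarrow> nat \<Rightarrow> 'v set set \<Rightarrow> real" where
  "mu_plus V E q \<S> = Max (insert 0 {mu_plus_XSf V E q X S f | X S f.
       S \<in> \<S> \<and> X \<in> configs V q \<and> f < card S})"

end

theory Submission
  imports Defs
begin

text \<open>Path coupling in Lipschitz form. Call \<open>g\<close> \<open>L\<close>-Lipschitz if recolouring one vertex changes
  \<open>g\<close> by at most \<open>L\<close>. Take two configurations differing only at \<open>v\<close> and update a block \<open>S\<close> in
  both with the same new colouring. If \<open>v \<in> S\<close> the discrepancy disappears; if \<open>v\<close> is neither in \<open>S\<close>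
  nor on its boundary the two heat-bath distributions coincide; if \<open>v \<in> \<partial>S\<close> they differ only on
  colourings that reuse the colour of \<open>v\<close>, which is not free, and counting colourings by their
  number of free colours shows that the hypothesis on \<open>q\<close> makes this contribution at most
  \<open>L/(4\<Psi>)\<close>. Averaging over blocks, one step of the chain maps \<open>L\<close>-Lipschitz functions to
  \<open>(1 - 3\<psi>\<^sub>m\<^sub>i\<^sub>n/4) L\<close>-Lipschitz ones. The Gibbs distribution is stationary (each heat-bath block
  update is reversible) and configurations are at Hamming distance at most \<open>n\<close>, so after \<open>t\<close> steps
  the total variation distance is at most \<open>n (1 - 3\<psi>\<^sub>m\<^sub>i\<^sub>n/4)\<^sup>t\<close>, which is below \<open>\<epsilon>\<close> from
  \<open>t = 2\<psi>\<^sub>m\<^sub>i\<^sub>n\<^sup>-\<^sup>1 log(n/\<epsilon>)\<close> on.\<close>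

section \<open>Counting colourings and elementary estimates\<close>

lemma card_PiE_if_le:
  assumes S: "finite S" and P: "P \<subseteq> S" and T: "card T = f" and N: "card N \<le> d"
    and d: "1 \<le> d" and fP: "f \<le> card P"
  shows "card (PiE S (\<lambda>u. if u \<in> P then T else N)) \<le> f ^ card P * d ^ (card S - f)"
proof -
  have "card (PiE S (\<lambda>u. if u \<in> P then T else N)) = (\<Prod>u\<in>S. if u \<in> P then card T else card N)"
    using S by (simp add: card_PiE if_distrib[where f=card])
  also have "\<dots> = f ^ card P * card N ^ (card S - card P)"
    using S P T by (simp add: prod.If_cases Int_absorb1 Diff_eq[symmetric] card_Diff_subset finite_subset)
  also have "\<dots> \<le> f ^ card P * d ^ (card S - f)"
  proof (rule mult_left_mono)
    have "card N ^ (card S - card P) \<le> d ^ (card S - card P)" using N by (rule power_mono) simp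
    also have "\<dots> \<le> d ^ (card S - f)" using d fP by (intro power_increasing) auto
    finally show "card N ^ (card S - card P) \<le> d ^ (card S - f)" .
  qed simp
  finally show ?thesis .
qed

text \<open>Colourings of \<open>S\<close> using exactly \<open>f\<close> colours outside \<open>N\<close>: choose those \<open>f\<close> colours,
  the set \<open>P\<close> of vertices receiving them, and colour the rest from \<open>N\<close>.\<close>

lemma card_colourings_free_colours_le:
  fixes S :: "'a set" and N :: "nat set"
  assumes S: "finite S" and N: "finite N" "card N \<le> d" and d: "1 \<le> d" and f: "f \<le> card S"
  shows "card {c \<in> PiE S (\<lambda>_. {..<q}). card (c ` S - N) = f}
           \<le> q ^ f * (f + 1) ^ card S * d ^ (card S - f)"
proof -
  define TT where "TT = {T. T \<subseteq> {..<q} - N \<and> card T = f}"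
  define PP where "PP = {P. P \<subseteq> S \<and> f \<le> card P}"
  define U where "U = (\<Union>T\<in>TT. \<Union>P\<in>PP. PiE S (\<lambda>u. if u \<in> P then T else N))"
  have TT_fin: "finite TT" unfolding TT_def by (rule finite_subset[of _ "Pow {..<q}"]) auto
  have PP_fin: "finite PP" unfolding PP_def using S by (auto intro: finite_subset[of _ "Pow S"])
  have cover: "{c \<in> PiE S (\<lambda>_. {..<q}). card (c ` S - N) = f} \<subseteq> U"
  proof
    fix c assume c: "c \<in> {c \<in> PiE S (\<lambda>_. {..<q}). card (c ` S - N) = f}"
    define P where "P = {u\<in>S. c u \<notin> N}"
    have "c ` P = c ` S - N" unfolding P_def by auto
    then have "f \<le> card P" using c S card_image_le[of P c] by (auto simp: P_def)
    then have "P \<in> PP" unfolding PP_def P_def by auto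
    moreover have "c ` S - N \<in> TT" using c unfolding TT_def by (auto simp: PiE_iff)
    moreover have "c \<in> PiE S (\<lambda>u. if u \<in> P then c ` S - N else N)"
      using c unfolding P_def by (auto simp: PiE_iff)
    ultimately show "c \<in> U" unfolding U_def by blast
  qed
  have U_fin: "finite U"
    unfolding U_def using N TT_def by (intro finite_UN_I TT_fin PP_fin finite_PiE S) (auto intro: finite_subset)
  have "card {c \<in> PiE S (\<lambda>_. {..<q}). card (c ` S - N) = f} \<le> card U"
    by (rule card_mono[OF U_fin cover])
  also have "\<dots> \<le> (\<Sum>T\<in>TT. \<Sum>P\<in>PP. card (PiE S (\<lambda>u. if u \<in> P then T else N)))"
    unfolding U_def
    by (rule order_trans[OF card_UN_le[OF TT_fin]], intro sum_mono card_UN_le[OF PP_fin])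
  also have "\<dots> \<le> (\<Sum>T\<in>TT. \<Sum>P\<in>PP. f ^ card P * d ^ (card S - f))"
    using card_PiE_if_le[OF S _ _ N(2) d] unfolding TT_def PP_def
    by (intro sum_mono) auto
  also have "\<dots> = card TT * (\<Sum>P\<in>PP. f ^ card P * d ^ (card S - f))" by simp
  also have "\<dots> \<le> q ^ f * ((f + 1) ^ card S * d ^ (card S - f))"
  proof (rule mult_le_mono)
    have "card TT = card ({..<q} - N) choose f" unfolding TT_def by (rule n_subsets) simp
    also have "\<dots> \<le> card ({..<q} - N) ^ f"
      by (cases "f \<le> card ({..<q} - N)") (auto intro: binomial_le_pow simp: binomial_eq_0)
    also have "\<dots> \<le> q ^ f"
      using card_mono[of "{..<q}" "{..<q} - N"] by (intro power_mono) auto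
    finally show "card TT \<le> q ^ f" .
    have "(\<Sum>P\<in>PP. f ^ card P * d ^ (card S - f)) \<le> (\<Sum>P\<in>Pow S. f ^ card P * d ^ (card S - f))"
      by (rule sum_mono2) (use S PP_def in auto)
    also have "\<dots> = (f + 1) ^ card S * d ^ (card S - f)"
      using prod_add[OF S, of "\<lambda>_. f" "\<lambda>_. 1"] by (simp add: sum_distrib_right[symmetric])
    finally show "(\<Sum>P\<in>PP. f ^ card P * d ^ (card S - f)) \<le> (f + 1) ^ card S * d ^ (card S - f)" .
  qed
  finally show ?thesis by (simp add: mult.assoc)
qed

lemma sum_diff_mult_le_oscillation:
  fixes p r h :: "'c \<Rightarrow> real"
  assumes C: "finite C" "C \<noteq> {}" and mass: "sum p C = sum r C"
    and osc: "\<And>c c'. c \<in> C \<Longrightarrow> c' \<in> C \<Longrightarrow> h c - h c' \<le> B"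
  shows "(\<Sum>c\<in>C. (p c - r c) * h c) \<le> B * (\<Sum>c\<in>C. max 0 (p c - r c))"
proof -
  define m where "m = Min (h ` C)"
  obtain c0 where c0: "c0 \<in> C" "h c0 = m"
    unfolding m_def using C by (metis (mono_tags, lifting) Min_in finite_imageI image_iff image_is_empty)
  have m_le: "m \<le> h c" if "c \<in> C" for c unfolding m_def using C that by simp
  have "(\<Sum>c\<in>C. (p c - r c) * h c) = (\<Sum>c\<in>C. (p c - r c) * (h c - m)) + m * (sum p C - sum r C)"
    by (simp add: algebra_simps sum_subtractf sum_distrib_left sum.distrib)
  also have "\<dots> = (\<Sum>c\<in>C. (p c - r c) * (h c - m))" using mass by simp
  also have "\<dots> \<le> (\<Sum>c\<in>C. max 0 (p c - r c) * B)"
  proof (rule sum_mono)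
    fix c assume c: "c \<in> C"
    have "(p c - r c) * (h c - m) \<le> max 0 (p c - r c) * (h c - m)"
      using m_le[OF c] by (intro mult_right_mono) auto
    also have "\<dots> \<le> max 0 (p c - r c) * B" using osc[OF c c0(1)] c0(2) by (intro mult_left_mono) auto
    finally show "(p c - r c) * (h c - m) \<le> max 0 (p c - r c) * B" .
  qed
  finally show ?thesis by (simp add: sum_distrib_left mult_ac)
qed

lemma four_mult_power_le_two_mult_power:
  assumes k: "1 \<le> k"
  shows "4 * real k ^ (k + 2) \<le> (2 * real k) ^ (k + 1)"
proof -
  obtain n where n: "k = Suc n" using k by (cases k) auto
  have "Suc n \<le> 2 ^ n" by (rule Suc_leI[OF less_exp])
  then have "2 * k \<le> (2::nat) ^ k" unfolding n by simp
  then have "2 * real k \<le> 2 ^ k" by (metis of_nat_le_iff of_nat_mult of_nat_numeral of_nat_power)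
  have "4 * real k ^ (k + 2) = 2 * (2 * real k) * real k ^ (k + 1)" by simp
  also have "\<dots> \<le> 2 * 2 ^ k * real k ^ (k + 1)"
    using \<open>2 * real k \<le> 2 ^ k\<close> by (intro mult_right_mono) auto
  also have "\<dots> = (2 * real k) ^ (k + 1)" by (simp add: power_mult_distrib)
  finally show ?thesis .
qed

lemma free_colour_term_le:
  fixes M q :: real
  assumes Md: "M * real d \<le> q" and M: "0 \<le> M" and f: "f < k"
  shows "M ^ (k - f) * q ^ f * ((real f + 1) ^ k * real d ^ (k - f))
           \<le> M * real d * real k ^ k * q ^ (k - 1)"
proof -
  obtain j where j: "k - f = Suc j" using f by (metis Suc_diff_Suc)
  have q: "0 \<le> q" using Md M by (meson order_trans mult_nonneg_nonneg of_nat_0_le_iff)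
  have "M ^ (k - f) * real d ^ (k - f) = M * real d * (M * real d) ^ j"
    unfolding j by (simp add: power_mult_distrib)
  also have "\<dots> \<le> M * real d * q ^ j" using Md M by (intro mult_left_mono power_mono) auto
  finally have Md_pow: "M ^ (k - f) * real d ^ (k - f) \<le> M * real d * q ^ j" .
  have f_pow: "(real f + 1) ^ k \<le> real k ^ k" using f by (intro power_mono) auto
  have "M ^ (k - f) * q ^ f * ((real f + 1) ^ k * real d ^ (k - f))
      = (M ^ (k - f) * real d ^ (k - f)) * q ^ f * (real f + 1) ^ k" by (simp add: mult_ac)
  also have "\<dots> \<le> (M * real d * q ^ j) * q ^ f * (real f + 1) ^ k"
    using Md_pow q by (intro mult_right_mono) auto
  also have "\<dots> \<le> (M * real d * q ^ j) * q ^ f * real k ^ k"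
    using f_pow M q by (intro mult_left_mono) auto
  also have "\<dots> = M * real d * real k ^ k * q ^ (k - 1)"
  proof -
    have "k - 1 = f + j" using j by simp
    then show ?thesis by (simp add: power_add mult_ac)
  qed
  finally show ?thesis .
qed

lemma free_colour_sum_le:
  fixes k d s b :: nat and M \<Psi> q :: real
  assumes k: "1 \<le> k" "k \<le> s" and d: "1 \<le> d" "d \<le> b" and M: "1 \<le> M" and \<Psi>: "0 < \<Psi>"
    and q: "(2 * real s) ^ (s + 1) * real b * \<Psi> * M \<le> q"
  shows "real k * \<Psi> * min 1 ((\<Sum>f<k. M ^ (k - f) * q ^ f * ((real f + 1) ^ k * real d ^ (k - f))) / q ^ k)
           \<le> 1 / 4"
proof (cases "\<Psi> \<le> 1 / (4 * real k)")
  case True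
  show ?thesis
    by (rule order_trans[OF mult_left_mono[OF min.cobounded1]]) (use True k \<Psi> in \<open>auto simp: field_simps\<close>)
next
  case False
  have "4 * real k ^ (k + 2) * real d \<le> (2 * real k) ^ (k + 1) * real d"
    using four_mult_power_le_two_mult_power[OF k(1)] by (intro mult_right_mono) auto
  also have "\<dots> \<le> (2 * real s) ^ (s + 1) * real b"
  proof (rule mult_mono)
    have "(2 * real k) ^ (k + 1) \<le> (2 * real s) ^ (k + 1)" using k by (intro power_mono) auto
    also have "\<dots> \<le> (2 * real s) ^ (s + 1)" using k by (intro power_increasing) auto
    finally show "(2 * real k) ^ (k + 1) \<le> (2 * real s) ^ (s + 1)" .
  qed (use d in auto)
  finally have "4 * real k ^ (k + 2) * real d * (\<Psi> * M) \<le> (2 * real s) ^ (s + 1) * real b * (\<Psi> * M)"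
    using \<Psi> M by (intro mult_right_mono) auto
  then have q_big: "4 * real k ^ (k + 2) * real d * \<Psi> * M \<le> q" using q by (simp add: mult_ac)
  have "0 < 4 * real k ^ (k + 2) * real d * \<Psi> * M" using k d \<Psi> M by simp
  then have q_pos: "0 < q" using q_big by linarith
  have "M * real d \<le> 4 * real k ^ (k + 2) * real d * \<Psi> * M"
  proof -
    have "1 < 4 * real k * \<Psi>" using False k by (simp add: field_simps)
    moreover have "1 \<le> real k ^ (k + 1)" using k by (intro one_le_power) simp
    ultimately have "1 * 1 \<le> real k ^ (k + 1) * (4 * real k * \<Psi>)" by (intro mult_mono) auto
    then have "M * real d * 1 \<le> M * real d * (real k ^ (k + 1) * (4 * real k * \<Psi>))"
      using M by (intro mult_left_mono) auto
    then show ?thesis by (simp add: power_Suc2 mult_ac)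
  qed
  then have Md: "M * real d \<le> q" using q_big by linarith
  define D where "D = (\<Sum>f<k. M ^ (k - f) * q ^ f * ((real f + 1) ^ k * real d ^ (k - f)))"
  have "D \<le> (\<Sum>f<k. M * real d * real k ^ k * q ^ (k - 1))"
    unfolding D_def using free_colour_term_le[OF Md] M by (intro sum_mono) auto
  then have D: "D \<le> M * real d * real k ^ (k + 1) * q ^ (k - 1)" by (simp add: mult_ac)
  have q_pow: "q ^ k = q * q ^ (k - 1)" using k by (metis Suc_diff_1 less_le_trans power_Suc zero_less_one)
  have "real k * \<Psi> * min 1 (D / q ^ k) \<le> real k * \<Psi> * (D / q ^ k)"
    using \<Psi> by (intro mult_left_mono) auto
  also have "\<dots> \<le> real k * \<Psi> * (M * real d * real k ^ (k + 1) * q ^ (k - 1) / q ^ k)"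
    using D \<Psi> q_pos by (intro mult_left_mono divide_right_mono) auto
  also have "\<dots> = real k * \<Psi> * (M * real d * real k ^ (k + 1)) / q"
    using q_pos q_pow by (simp add: field_simps)
  also have "\<dots> = 4 * real k ^ (k + 2) * real d * \<Psi> * M / (4 * q)" by (simp add: mult_ac)
  also have "\<dots> \<le> 1 / 4" using q_big q_pos by (simp add: field_simps)
  finally show ?thesis unfolding D_def .
qed

lemma ln_one_minus_le:
  fixes a :: real
  assumes "0 \<le> a" "a < 1"
  shows "ln (1 - a) \<le> - a - a ^ 2 / 2"
proof -
  let ?f = "\<lambda>x::real. ln (1 - x) + x + x ^ 2 / 2"
  have "?f a \<le> ?f 0"
  proof (rule DERIV_nonpos_imp_nonincreasing[OF assms(1)])
    fix x assume x: "0 \<le> x" "x \<le> a"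
    then have x1: "0 < 1 - x" using assms(2) by simp
    have "DERIV ?f x :> - (x ^ 2) / (1 - x)"
      using x1 by (auto intro!: derivative_eq_intros simp: power2_eq_square field_simps)
    moreover have "- (x ^ 2) / (1 - x) \<le> 0" using x1 by (simp add: divide_nonpos_pos)
    ultimately show "\<exists>y. DERIV ?f x :> y \<and> y \<le> 0" by blast
  qed
  then show ?thesis by simp
qed

lemma ln_2_ge_5_div_8: "5 / 8 \<le> ln (2::real)"
proof -
  have "ln (1 - 1 / 2 :: real) \<le> - (1 / 2) - (1 / 2) ^ 2 / 2" by (rule ln_one_minus_le) auto
  moreover have "ln (1 - 1 / 2 :: real) = - ln 2" by (simp add: ln_div)
  ultimately show ?thesis by (simp add: power2_eq_square)
qed

text \<open>With \<open>a = 3p/4\<close> this is \<open>(2L/p - 1)(a + a\<^sup>2/2) \<ge> L\<close>, the form in which it is used below.\<close>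

lemma mixing_exponent_ineq:
  fixes n :: nat and p L :: real
  assumes n: "2 \<le> n" and p: "0 < p" "real n * p \<le> real n - 1" and L: "ln (real n) \<le> L"
  shows "24 * p + 9 * p ^ 2 \<le> 16 * L + 18 * L * p"
proof (cases "n = 2")
  case True
  then have p_half: "p \<le> 1 / 2" using p by simp
  have L_ge: "5 / 8 \<le> L" using L ln_2_ge_5_div_8 True by simp
  have "18 * (5 / 8) * p \<le> 18 * L * p" using L_ge p by (intro mult_right_mono) auto
  moreover have "9 * p ^ 2 \<le> 9 * (1 / 2) * p" using p_half p by (simp add: power2_eq_square)
  ultimately show ?thesis using L_ge p_half by linarith
next
  case False
  then have "ln 3 \<le> ln (real n)" using n by simp
  moreover have "1 \<le> ln (3::real)"
    using exp_le by (metis ln_exp ln_le_cancel_iff exp_gt_zero zero_less_numeral)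
  ultimately have L_ge: "1 \<le> L" using L by linarith
  have "real n * p < real n * 1" using p(2) by simp
  then have p_lt: "p < 1" using n by (simp add: mult_less_cancel_left_pos)
  have "18 * p \<le> 18 * L * p" using L_ge p by simp
  moreover have "9 * p ^ 2 \<le> 9 * p" using p_lt p by (simp add: power2_eq_square)
  ultimately show ?thesis using L_ge p_lt by linarith
qed

lemma decay_at_mixing_time_le:
  fixes n :: nat and p eps :: real
  assumes n: "2 \<le> n" and p: "0 < p" "real n * p \<le> real n - 1" and eps: "0 < eps" "eps < 1"
  shows "real n * (1 - 3 / 4 * p) ^ nat \<lfloor>2 / p * ln (real n / eps)\<rfloor> \<le> eps"
proof -
  define L where "L = ln (real n / eps)"
  define a where "a = 3 / 4 * p"
  define T where "T = nat \<lfloor>2 / p * L\<rfloor>"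
  have "real n * p < real n * 1" using p(2) by simp
  then have p_lt: "p < 1" using n by (simp add: mult_less_cancel_left_pos)
  have L_eq: "L = ln (real n) - ln eps" unfolding L_def using eps n by (simp add: ln_div)
  have L_ge: "ln (real n) \<le> L" using L_eq eps by simp
  have "ln 2 \<le> ln (real n)" using n by simp
  then have L_pos: "5 / 8 \<le> L" using ln_2_ge_5_div_8 L_ge by linarith
  have "2 * L \<le> 2 / p * L" using L_pos p p_lt by (simp add: field_simps mult_left_mono)
  then have T_ge: "2 / p * L - 1 \<le> real T" "0 \<le> 2 / p * L - 1"
    using L_pos unfolding T_def by linarith+
  have a: "0 \<le> a" "a < 1" using p p_lt unfolding a_def by auto
  have "real T * ln (1 - a) \<le> real T * (- a - a ^ 2 / 2)"
    using ln_one_minus_le[OF a] by (intro mult_left_mono) auto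
  also have "\<dots> \<le> (2 / p * L - 1) * (- a - a ^ 2 / 2)"
  proof (rule mult_right_mono_neg)
    have "0 \<le> a ^ 2" by simp
    then show "- a - a ^ 2 / 2 \<le> 0" using a by linarith
  qed (use T_ge in simp)
  also have "\<dots> = - ((2 * L - p) * (24 + 9 * p) / 32)"
    unfolding a_def using p by (simp add: field_simps power2_eq_square)
  also have "\<dots> \<le> - L"
    using mixing_exponent_ineq[OF n p L_ge] by (simp add: field_simps power2_eq_square algebra_simps)
  finally have "ln (real n) + real T * ln (1 - a) \<le> ln eps" using L_eq by simp
  then have "ln (real n * (1 - a) ^ T) \<le> ln eps" using a n by (simp add: ln_mult ln_realpow)
  then have "real n * (1 - a) ^ T \<le> eps" using a n eps by simp
  then show ?thesis unfolding T_def a_def L_def .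
qed

lemma sum_max_0_diff_swap:
  fixes p r :: "'c \<Rightarrow> real"
  assumes "sum p C = sum r C"
  shows "(\<Sum>c\<in>C. max 0 (p c - r c)) = (\<Sum>c\<in>C. max 0 (r c - p c))"
proof -
  have "max 0 (p c - r c) - max 0 (r c - p c) = p c - r c" for c by auto
  then have "(\<Sum>c\<in>C. max 0 (p c - r c)) - (\<Sum>c\<in>C. max 0 (r c - p c)) = sum p C - sum r C"
    by (simp add: sum_subtractf[symmetric])
  then show ?thesis using assms by simp
qed

lemma mixing_time_le:
  assumes "finite Om" "Om \<noteq> {}" and "\<forall>x\<in>Om. tv_dist Om (mat_pow Om P T x) \<pi> \<le> eps"
  shows "mixing_time Om P \<pi> eps \<le> T"
  unfolding mixing_time_def using assms by (auto intro!: Max.boundedI Least_le)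

section \<open>Heat-bath block dynamics\<close>

locale block_dynamics =
  fixes V :: "'v set" and E :: "'v \<Rightarrow> 'v \<Rightarrow> bool" and q :: nat and lam :: real
    and SS :: "'v set set" and psi :: "'v set \<Rightarrow> real"
  assumes simple: "simple_graph V E" and blocks: "block_system V SS"
    and prob: "prob_on SS psi" and lam_gt_1: "1 < lam" and q_pos: "0 < q"
begin

abbreviation "\<Omega> \<equiv> configs V q"
abbreviation "colourings S \<equiv> PiE S (\<lambda>_. {..<q})"
abbreviation "BD \<equiv> block_dyn V E q lam SS psi"
abbreviation "\<pi> \<equiv> gibbs V E q lam"
abbreviation agree_off :: "'v set \<Rightarrow> ('v \<Rightarrow> nat) \<Rightarrow> ('v \<Rightarrow> nat) \<Rightarrow> bool"
  where "agree_off S X Y \<equiv> \<forall>v. v \<notin> S \<longrightarrow> X v = Y v"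

definition weight :: "('v \<Rightarrow> nat) \<Rightarrow> 'v set \<Rightarrow> ('v \<Rightarrow> nat) \<Rightarrow> real" where
  "weight X S c = lam ^ mu_block V E X S c"

definition weight_sum :: "('v \<Rightarrow> nat) \<Rightarrow> 'v set \<Rightarrow> real" where
  "weight_sum X S = (\<Sum>c\<in>colourings S. weight X S c)"

definition heat_bath :: "('v \<Rightarrow> nat) \<Rightarrow> 'v set \<Rightarrow> ('v \<Rightarrow> nat) \<Rightarrow> real" where
  "heat_bath X S c = weight X S c / weight_sum X S"

definition block_mean :: "(('v \<Rightarrow> nat) \<Rightarrow> real) \<Rightarrow> ('v \<Rightarrow> nat) \<Rightarrow> 'v set \<Rightarrow> real" where
  "block_mean g X S = (\<Sum>c\<in>colourings S. heat_bath X S c * g (upd_conf X S c))"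

definition markov_op :: "(('v \<Rightarrow> nat) \<Rightarrow> real) \<Rightarrow> ('v \<Rightarrow> nat) \<Rightarrow> real" where
  "markov_op g x = (\<Sum>y\<in>\<Omega>. BD x y * g y)"

definition hamming_lipschitz :: "real \<Rightarrow> (('v \<Rightarrow> nat) \<Rightarrow> real) \<Rightarrow> bool" where
  "hamming_lipschitz L g \<longleftrightarrow>
     (\<forall>X\<in>\<Omega>. \<forall>Y\<in>\<Omega>. \<forall>v\<in>V. (\<forall>u. u \<noteq> v \<longrightarrow> X u = Y u) \<longrightarrow> \<bar>g X - g Y\<bar> \<le> L)"

lemma finite_V: "finite V" using simple by (simp add: simple_graph_def)
lemma adj_sym: "E u v \<Longrightarrow> E v u" using simple by (simp add: simple_graph_def)
lemma adj_in_V: "E u v \<Longrightarrow> u \<in> V \<and> v \<in> V" using simple by (simp add: simple_graph_def)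
lemma finite_blocks: "finite SS" using prob by (simp add: prob_on_def)
lemma psi_nonneg: "S \<in> SS \<Longrightarrow> 0 \<le> psi S" using prob by (simp add: prob_on_def)
lemma sum_psi: "(\<Sum>S\<in>SS. psi S) = 1" using prob by (simp add: prob_on_def)
lemma block_subset: "S \<in> SS \<Longrightarrow> S \<subseteq> V" using blocks by (simp add: block_system_def)
lemma finite_block: "S \<in> SS \<Longrightarrow> finite S" using block_subset finite_V finite_subset by blast
lemma finite_boundary: "finite (boundary V E S)" unfolding boundary_def using finite_V by auto
lemma finite_edges: "finite (edges V E)"
proof -
  have "edges V E \<subseteq> Pow V" unfolding edges_def by auto
  then show ?thesis using finite_V finite_subset by blast
qed

lemma finite_configs: "finite \<Omega>" unfolding configs_def using finite_V by (simp add: finite_PiE)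
lemma configs_nonempty: "\<Omega> \<noteq> {}"
  using q_pos by (auto simp: configs_def PiE_eq_empty_iff)
lemma colourings_nonempty: "colourings S \<noteq> {}" using q_pos by (auto simp: PiE_eq_empty_iff)

lemma upd_conf_in_configs: "X \<in> \<Omega> \<Longrightarrow> S \<subseteq> V \<Longrightarrow> c \<in> colourings S \<Longrightarrow> upd_conf X S c \<in> \<Omega>"
  unfolding configs_def upd_conf_def by (auto simp: PiE_iff extensional_def)

lemma restrict_in_colourings: "Y \<in> \<Omega> \<Longrightarrow> S \<subseteq> V \<Longrightarrow> restrict Y S \<in> colourings S"
  unfolding configs_def by (auto simp: PiE_iff)

lemma one_le_weight: "1 \<le> weight X S c" unfolding weight_def using lam_gt_1 by simp
lemma weight_pos: "0 < weight X S c" using one_le_weight[of X S c] by linarith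

lemma weight_sum_ge: "finite S \<Longrightarrow> real q ^ card S \<le> weight_sum X S"
proof -
  assume S: "finite S"
  have "real q ^ card S = (\<Sum>c\<in>colourings S. 1)" using S by (simp add: card_PiE)
  also have "\<dots> \<le> weight_sum X S" unfolding weight_sum_def by (rule sum_mono) (rule one_le_weight)
  finally show ?thesis .
qed

lemma weight_sum_pos: "finite S \<Longrightarrow> 0 < weight_sum X S"
  using weight_sum_ge[of S X] q_pos by (smt (verit) of_nat_0_less_iff zero_less_power)

lemma heat_bath_nonneg: "finite S \<Longrightarrow> 0 \<le> heat_bath X S c"
  unfolding heat_bath_def using weight_sum_pos weight_pos by (simp add: less_imp_le)

lemma sum_heat_bath: "finite S \<Longrightarrow> (\<Sum>c\<in>colourings S. heat_bath X S c) = 1"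
  unfolding heat_bath_def using weight_sum_pos[of S X]
  by (simp add: sum_divide_distrib[symmetric] weight_sum_def)

lemma upd_conf_agree_off: "agree_off S X Y \<Longrightarrow> upd_conf X S c = upd_conf Y S c"
  by (auto simp: upd_conf_def)

lemma heat_bath_agree_off:
  assumes "agree_off S X Y"
  shows "heat_bath X S c = heat_bath Y S c"
  using upd_conf_agree_off[OF assms]
  by (simp add: heat_bath_def weight_sum_def weight_def mu_block_def)

lemma block_mean_agree_off:
  assumes "agree_off S X Y"
  shows "block_mean g X S = block_mean g Y S"
  unfolding block_mean_def using heat_bath_agree_off[OF assms] upd_conf_agree_off[OF assms] by simp

lemma markov_op_eq_block_mean:
  assumes X: "X \<in> \<Omega>"
  shows "markov_op g X = (\<Sum>S\<in>SS. psi S * block_mean g X S)"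
proof -
  have "markov_op g X
      = (\<Sum>y\<in>\<Omega>. \<Sum>S\<in>SS. psi S * (\<Sum>c\<in>colourings S. (if upd_conf X S c = y then heat_bath X S c else 0) * g y))"
    unfolding markov_op_def block_dyn_def heat_bath_def weight_def weight_sum_def
    by (simp add: sum_distrib_right mult.assoc)
  also have "\<dots> = (\<Sum>S\<in>SS. psi S * (\<Sum>c\<in>colourings S. \<Sum>y\<in>\<Omega>. (if upd_conf X S c = y then heat_bath X S c else 0) * g y))"
    by (subst sum.swap) (simp add: sum_distrib_left sum.swap[of _ \<Omega>])
  also have "\<dots> = (\<Sum>S\<in>SS. psi S * block_mean g X S)"
    unfolding block_mean_def
    using upd_conf_in_configs[OF X block_subset] finite_configs
    by (intro sum.cong refl arg_cong[where f="\<lambda>t. psi _ * t"])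
       (simp add: if_distrib[where f="\<lambda>t. t * _"] sum.delta cong: if_cong)
  finally show ?thesis .
qed

subsection \<open>Stationarity of the Gibbs distribution\<close>

definition block_kernel :: "'v set \<Rightarrow> ('v \<Rightarrow> nat) \<Rightarrow> ('v \<Rightarrow> nat) \<Rightarrow> real" where
  "block_kernel S x y = (if agree_off S x y then heat_bath x S (restrict y S) else 0)"

lemma sum_block_kernel_mult:
  assumes x: "x \<in> \<Omega>" and S: "S \<subseteq> V"
  shows "(\<Sum>y\<in>\<Omega>. block_kernel S x y * g y) = block_mean g x S"
proof -
  let ?A = "{y\<in>\<Omega>. agree_off S x y}"
  have restrict_upd: "restrict (upd_conf x S c) S = c" if "c \<in> colourings S" for c
    using that by (auto simp: upd_conf_def PiE_iff extensional_def restrict_def)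
  have bij: "bij_betw (upd_conf x S) (colourings S) ?A"
  proof (rule bij_betw_byWitness[where f'="\<lambda>y. restrict y S"])
    show "\<forall>y\<in>?A. upd_conf x S (restrict y S) = y" by (auto simp: upd_conf_def)
    show "upd_conf x S ` colourings S \<subseteq> ?A" using upd_conf_in_configs[OF x S] by (auto simp: upd_conf_def)
    show "(\<lambda>y. restrict y S) ` ?A \<subseteq> colourings S" using restrict_in_colourings[OF _ S] by blast
  qed (use restrict_upd in blast)
  have "(\<Sum>y\<in>\<Omega>. block_kernel S x y * g y) = (\<Sum>y\<in>?A. heat_bath x S (restrict y S) * g y)"
    unfolding block_kernel_def using finite_configs
    by (simp add: sum.inter_filter[symmetric] if_distrib[where f="\<lambda>t. t * _"] cong: if_cong)
  also have "\<dots> = (\<Sum>c\<in>colourings S. heat_bath x S (restrict (upd_conf x S c) S) * g (upd_conf x S c))"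
    by (rule sum.reindex_bij_betw[OF bij, symmetric])
  also have "\<dots> = block_mean g x S" unfolding block_mean_def by (simp add: restrict_upd)
  finally show ?thesis .
qed

definition mono_off :: "'v set \<Rightarrow> ('v \<Rightarrow> nat) \<Rightarrow> nat" where
  "mono_off S z = card {e\<in>edges V E. monochromatic E z e \<and> e \<inter> S = {}}"

lemma mono_count_split: "mono_count V E z = mu_block V E z S (restrict z S) + mono_off S z"
proof -
  have "upd_conf z S (restrict z S) = z" by (auto simp: upd_conf_def)
  then have "mu_block V E z S (restrict z S) = card {e\<in>edges V E. monochromatic E z e \<and> e \<inter> S \<noteq> {}}"
    by (simp add: mu_block_def)
  moreover have "{e\<in>edges V E. monochromatic E z e}
      = {e\<in>edges V E. monochromatic E z e \<and> e \<inter> S \<noteq> {}} \<union> {e\<in>edges V E. monochromatic E z e \<and> e \<inter> S = {}}"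
    by blast
  ultimately show ?thesis
    unfolding mono_count_def mono_off_def using finite_edges
    by (simp add: card_Un_disjoint disjoint_iff)
qed

lemma mono_off_agree_off:
  assumes "agree_off S x y"
  shows "mono_off S x = mono_off S y"
proof -
  have "monochromatic E x e = monochromatic E y e" if "e \<inter> S = {}" for e
    unfolding monochromatic_def using assms that by (metis Int_insert_left insert_not_empty)
  then show ?thesis unfolding mono_off_def by (metis (lifting))
qed

text \<open>Both sides equal \<open>\<lambda>\<^bsup>\<mu>(x) + \<mu>(y) - m\<^esup> / (Z Z\<^sub>S)\<close>, where \<open>m\<close> counts the monochromatic edges away from \<open>S\<close>,
  on which \<open>x\<close> and \<open>y\<close> agree.\<close>

lemma gibbs_block_kernel_sym:
  shows "\<pi> x * block_kernel S x y = \<pi> y * block_kernel S y x"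
proof (cases "agree_off S x y")
  case True
  then have yx: "agree_off S y x" by auto
  have mu_eq: "mu_block V E x S c = mu_block V E y S c" for c
    using upd_conf_agree_off[OF True] by (simp add: mu_block_def)
  have "lam ^ mono_count V E x * lam ^ mu_block V E x S (restrict y S)
      = lam ^ mono_count V E y * lam ^ mu_block V E y S (restrict x S)"
    using mono_count_split[of x S] mono_count_split[of y S] mono_off_agree_off[OF True] mu_eq
    by (simp add: power_add[symmetric] add_ac)
  then have "lam ^ mono_count V E x / (\<Sum>\<tau>\<in>\<Omega>. lam ^ mono_count V E \<tau>) * (lam ^ mu_block V E x S (restrict y S) / weight_sum y S)
      = lam ^ mono_count V E y / (\<Sum>\<tau>\<in>\<Omega>. lam ^ mono_count V E \<tau>) * (lam ^ mu_block V E y S (restrict x S) / weight_sum y S)"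
    by (simp add: times_divide_times_eq)
  moreover have "weight_sum x S = weight_sum y S"
    unfolding weight_sum_def weight_def using mu_eq by simp
  ultimately show ?thesis using True yx
    unfolding block_kernel_def gibbs_def heat_bath_def weight_def by simp
next
  case False
  moreover have "\<not> agree_off S y x" using False by metis
  ultimately show ?thesis unfolding block_kernel_def by (simp only: if_False mult_zero_right)
qed

lemma sum_gibbs_block_mean:
  assumes S: "S \<subseteq> V"
  shows "(\<Sum>x\<in>\<Omega>. \<pi> x * block_mean g x S) = (\<Sum>y\<in>\<Omega>. \<pi> y * g y)"
proof -
  have "(\<Sum>x\<in>\<Omega>. \<pi> x * block_mean g x S) = (\<Sum>x\<in>\<Omega>. \<Sum>y\<in>\<Omega>. \<pi> x * block_kernel S x y * g y)"
    by (rule sum.cong[OF refl]) (simp add: sum_block_kernel_mult[OF _ S, symmetric] sum_distrib_left mult.assoc)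
  also have "\<dots> = (\<Sum>x\<in>\<Omega>. \<Sum>y\<in>\<Omega>. \<pi> y * block_kernel S y x * g y)"
    by (simp add: gibbs_block_kernel_sym)
  also have "\<dots> = (\<Sum>y\<in>\<Omega>. \<pi> y * g y * (\<Sum>x\<in>\<Omega>. block_kernel S y x * 1))"
    by (subst sum.swap) (simp add: sum_distrib_left mult_ac)
  also have "\<dots> = (\<Sum>y\<in>\<Omega>. \<pi> y * g y)"
  proof (rule sum.cong[OF refl])
    fix y assume y: "y \<in> \<Omega>"
    have "finite S" using S finite_V finite_subset by blast
    then have "(\<Sum>x\<in>\<Omega>. block_kernel S y x * 1) = 1"
      unfolding sum_block_kernel_mult[OF y S] block_mean_def by (simp add: sum_heat_bath)
    then show "\<pi> y * g y * (\<Sum>x\<in>\<Omega>. block_kernel S y x * 1) = \<pi> y * g y" by simp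
  qed
  finally show ?thesis .
qed

lemma sum_gibbs_markov_op: "(\<Sum>x\<in>\<Omega>. \<pi> x * markov_op g x) = (\<Sum>y\<in>\<Omega>. \<pi> y * g y)"
proof -
  have "(\<Sum>x\<in>\<Omega>. \<pi> x * markov_op g x) = (\<Sum>S\<in>SS. psi S * (\<Sum>x\<in>\<Omega>. \<pi> x * block_mean g x S))"
    by (simp add: markov_op_eq_block_mean sum_distrib_left sum.swap[of _ SS] mult_ac cong: sum.cong)
  also have "\<dots> = (\<Sum>y\<in>\<Omega>. \<pi> y * g y)"
    by (simp add: sum_gibbs_block_mean block_subset sum_distrib_right[symmetric] sum_psi cong: sum.cong)
  finally show ?thesis .
qed

lemma markov_op_const: "X \<in> \<Omega> \<Longrightarrow> markov_op (\<lambda>_. 1) X = 1"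
  by (simp add: markov_op_eq_block_mean block_mean_def sum_heat_bath finite_block sum_psi cong: sum.cong)

lemma gibbs_nonneg: "0 \<le> \<pi> x"
  unfolding gibbs_def using lam_gt_1 by (simp add: sum_nonneg)

lemma sum_gibbs: "(\<Sum>x\<in>\<Omega>. \<pi> x) = 1"
proof -
  have "(\<Sum>\<tau>\<in>\<Omega>. 1) \<le> (\<Sum>\<tau>\<in>\<Omega>. lam ^ mono_count V E \<tau>)"
    using lam_gt_1 by (intro sum_mono) simp
  moreover have "0 < (\<Sum>\<tau>\<in>\<Omega>. (1::real))" using configs_nonempty finite_configs by (simp add: card_gt_0_iff)
  ultimately show ?thesis unfolding gibbs_def by (simp add: sum_divide_distrib[symmetric])
qed

lemma sum_mat_pow_mult: "x \<in> \<Omega> \<Longrightarrow> (\<Sum>y\<in>\<Omega>. mat_pow \<Omega> BD t x y * g y) = (markov_op ^^ t) g x"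
proof (induction t arbitrary: g)
  case 0
  then show ?case using finite_configs by (simp add: if_distrib[where f="\<lambda>t. t * _"] sum.delta cong: if_cong)
next
  case (Suc t)
  have "(\<Sum>y\<in>\<Omega>. mat_pow \<Omega> BD (Suc t) x y * g y) = (\<Sum>z\<in>\<Omega>. \<Sum>y\<in>\<Omega>. mat_pow \<Omega> BD t x z * (BD z y * g y))"
    by (simp add: sum_distrib_right mult.assoc) (rule sum.swap)
  also have "\<dots> = (\<Sum>z\<in>\<Omega>. mat_pow \<Omega> BD t x z * markov_op g z)"
    by (simp add: markov_op_def sum_distrib_left)
  also have "\<dots> = (markov_op ^^ Suc t) g x" by (simp add: Suc.IH[OF Suc.prems] funpow_swap1)
  finally show ?case .
qed

lemma markov_op_cong: "(\<And>y. y \<in> \<Omega> \<Longrightarrow> g y = h y) \<Longrightarrow> markov_op g x = markov_op h x"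
  unfolding markov_op_def by (rule sum.cong) auto

lemma markov_op_funpow_const: "x \<in> \<Omega> \<Longrightarrow> (markov_op ^^ t) (\<lambda>_. 1) x = 1"
proof (induction t arbitrary: x)
  case (Suc t)
  have "(markov_op ^^ Suc t) (\<lambda>_. 1) x = markov_op (\<lambda>_. 1) x"
    unfolding funpow.simps comp_def by (rule markov_op_cong) (rule Suc.IH)
  then show ?case using markov_op_const[OF Suc.prems] by simp
qed simp

lemma sum_gibbs_markov_op_funpow: "(\<Sum>x\<in>\<Omega>. \<pi> x * (markov_op ^^ t) g x) = (\<Sum>y\<in>\<Omega>. \<pi> y * g y)"
  by (induction t) (simp_all add: sum_gibbs_markov_op)

subsection \<open>Lipschitz functions and total variation\<close>

lemma hamming_lipschitz_diff_le:
  fixes L :: real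
  assumes g: "hamming_lipschitz L g" and L: "0 \<le> L"
  shows "X \<in> \<Omega> \<Longrightarrow> Y \<in> \<Omega> \<Longrightarrow> card {v\<in>V. X v \<noteq> Y v} = m \<Longrightarrow> \<bar>g X - g Y\<bar> \<le> real m * L"
proof (induction m arbitrary: X)
  case 0
  then have "\<forall>v\<in>V. X v = Y v" using finite_V by auto
  moreover have "\<forall>v. v \<notin> V \<longrightarrow> X v = Y v"
    using 0 unfolding configs_def by (auto simp: PiE_iff extensional_def)
  ultimately have "X = Y" by auto
  then show ?case by simp
next
  case (Suc m)
  then have "{v\<in>V. X v \<noteq> Y v} \<noteq> {}" by (intro notI) simp
  then obtain v where v: "v \<in> V" "X v \<noteq> Y v" by blast
  define X' where "X' = X(v := Y v)"
  have X': "X' \<in> \<Omega>" using Suc.prems v unfolding X'_def configs_def by (auto simp: PiE_iff extensional_def)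
  have "{u\<in>V. X' u \<noteq> Y u} = {u\<in>V. X u \<noteq> Y u} - {v}" unfolding X'_def by auto
  then have "card {u\<in>V. X' u \<noteq> Y u} = m" using Suc.prems(3) v by simp
  then have "\<bar>g X' - g Y\<bar> \<le> m * L" using Suc.IH X' Suc.prems by blast
  moreover have "\<bar>g X - g X'\<bar> \<le> L"
    using g Suc.prems(1) X' v(1) unfolding hamming_lipschitz_def by (metis X'_def fun_upd_other)
  ultimately show ?case by (simp add: algebra_simps)
qed

lemma hamming_lipschitz_diff_le_card:
  fixes L :: real
  assumes g: "hamming_lipschitz L g" and L: "0 \<le> L" and X: "X \<in> \<Omega>" and Y: "Y \<in> \<Omega>"
    and A: "finite A" "{v\<in>V. X v \<noteq> Y v} \<subseteq> A"
  shows "\<bar>g X - g Y\<bar> \<le> real (card A) * L"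
proof -
  have "\<bar>g X - g Y\<bar> \<le> real (card {v\<in>V. X v \<noteq> Y v}) * L" by (rule hamming_lipschitz_diff_le[OF g L X Y refl])
  also have "\<dots> \<le> real (card A) * L" using L A by (intro mult_right_mono) (auto intro: card_mono)
  finally show ?thesis .
qed

lemma hamming_lipschitz_funpow:
  fixes r :: real
  assumes contr: "\<And>L g. 0 \<le> L \<Longrightarrow> hamming_lipschitz L g \<Longrightarrow> hamming_lipschitz (r * L) (markov_op g)"
    and r: "0 \<le> r" and h: "hamming_lipschitz 1 h"
  shows "hamming_lipschitz (r ^ t) ((markov_op ^^ t) h)"
proof (induction t)
  case (Suc t)
  then show ?case using contr[of "r ^ t"] r by simp
qed (use h in simp)

text \<open>Coupling-free form of path coupling: \<open>P\<^sup>t(x, \<cdot>) - \<pi>\<close> is tested against the indicator \<open>h\<close> of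
  \<open>{y. P\<^sup>t(x, y) > \<pi>(y)}\<close>; by stationarity this is an average of \<open>P\<^sup>th(x) - P\<^sup>th(z)\<close>, and \<open>P\<^sup>th\<close> is
  \<open>r\<^sup>t\<close>-Lipschitz while configurations are at Hamming distance at most \<open>|V|\<close>.\<close>

lemma tv_dist_mat_pow_le:
  fixes r :: real
  assumes contr: "\<And>L g. 0 \<le> L \<Longrightarrow> hamming_lipschitz L g \<Longrightarrow> hamming_lipschitz (r * L) (markov_op g)"
    and r: "0 \<le> r" and x: "x \<in> \<Omega>"
  shows "tv_dist \<Omega> (mat_pow \<Omega> BD t x) \<pi> \<le> card V * r ^ t"
proof -
  let ?p = "mat_pow \<Omega> BD t x"
  define h where "h y = (if ?p y > \<pi> y then 1 else (0::real))" for y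
  define G where "G = (markov_op ^^ t) h"
  have G: "hamming_lipschitz (r ^ t) G"
    unfolding G_def by (rule hamming_lipschitz_funpow[OF contr r]) (auto simp: hamming_lipschitz_def h_def)
  have p_sum: "(\<Sum>y\<in>\<Omega>. ?p y) = 1"
    using sum_mat_pow_mult[OF x, of t "\<lambda>_. 1"] markov_op_funpow_const[OF x, of t] by simp
  have abs_eq: "\<bar>?p y - \<pi> y\<bar> = 2 * ((?p y - \<pi> y) * h y) - (?p y - \<pi> y)" for y
    unfolding h_def by auto
  have "(\<Sum>y\<in>\<Omega>. \<bar>?p y - \<pi> y\<bar>)
      = 2 * (\<Sum>y\<in>\<Omega>. (?p y - \<pi> y) * h y) - ((\<Sum>y\<in>\<Omega>. ?p y) - (\<Sum>y\<in>\<Omega>. \<pi> y))"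
    by (simp add: abs_eq sum_subtractf sum_distrib_left)
  then have "tv_dist \<Omega> ?p \<pi> = (\<Sum>y\<in>\<Omega>. ?p y * h y) - (\<Sum>y\<in>\<Omega>. \<pi> y * h y)"
    using p_sum sum_gibbs unfolding tv_dist_def by (simp add: sum_subtractf left_diff_distrib)
  also have "\<dots> = (\<Sum>z\<in>\<Omega>. \<pi> z * (G x - G z))"
    using sum_mat_pow_mult[OF x] sum_gibbs_markov_op_funpow[of t h, symmetric] sum_gibbs
    unfolding G_def by (simp add: right_diff_distrib sum_subtractf sum_distrib_right[symmetric])
  also have "\<dots> \<le> (\<Sum>z\<in>\<Omega>. \<pi> z * (card V * r ^ t))"
  proof (rule sum_mono)
    fix z assume z: "z \<in> \<Omega>"
    have "\<bar>G x - G z\<bar> \<le> card V * r ^ t"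
      by (rule hamming_lipschitz_diff_le_card[OF G _ x z finite_V]) (use r in auto)
    then show "\<pi> z * (G x - G z) \<le> \<pi> z * (card V * r ^ t)"
      using gibbs_nonneg[of z] by (intro mult_left_mono) auto
  qed
  also have "\<dots> = card V * r ^ t" using sum_gibbs by (simp add: sum_distrib_right[symmetric])
  finally show ?thesis .
qed

subsection \<open>Colourings that reuse a boundary colour\<close>

abbreviation "lam_mu_plus \<equiv> lam powr mu_plus V E q SS"

text \<open>There are at most \<open>q\<^sup>f (f + 1)\<^bsup>|S|\<^esup> |\<partial>S|\<^bsup>|S|-f\<^esup>\<close> colourings of \<open>S\<close> with \<open>f\<close> free colours,
  each of weight at most \<open>(\<lambda>\<^bsup>\<mu>\<^sup>+\<^esup>)\<^bsup>|S|-f\<^esup>\<close> when \<open>f < |S|\<close>.\<close>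

abbreviation free_colour_sum :: "'v set \<Rightarrow> real" where
  "free_colour_sum S \<equiv> (\<Sum>f<card S. lam_mu_plus ^ (card S - f) * real q ^ f
                          * ((real f + 1) ^ card S * real (card (boundary V E S)) ^ (card S - f)))"

lemma finite_mu_plus_values:
  "finite {mu_plus_XSf V E q X S f | X S f. S \<in> SS \<and> X \<in> \<Omega> \<and> f < card S}"
proof (rule finite_subset)
  show "{mu_plus_XSf V E q X S f | X S f. S \<in> SS \<and> X \<in> \<Omega> \<and> f < card S}
        \<subseteq> (\<lambda>(X, S, f). mu_plus_XSf V E q X S f) ` (\<Omega> \<times> SS \<times> {..<card V})"
  proof
    fix x assume "x \<in> {mu_plus_XSf V E q X S f | X S f. S \<in> SS \<and> X \<in> \<Omega> \<and> f < card S}"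
    then obtain X S f where "x = mu_plus_XSf V E q X S f" "S \<in> SS" "X \<in> \<Omega>" "f < card S" by blast
    moreover have "card S \<le> card V" using \<open>S \<in> SS\<close> block_subset finite_V by (simp add: card_mono)
    ultimately show "x \<in> (\<lambda>(X, S, f). mu_plus_XSf V E q X S f) ` (\<Omega> \<times> SS \<times> {..<card V})"
      by (intro image_eqI[where x="(X, S, f)"]) auto
  qed
qed (use finite_configs finite_blocks in auto)

lemma mu_plus_nonneg: "0 \<le> mu_plus V E q SS"
  unfolding mu_plus_def using finite_mu_plus_values by (intro Max_ge) auto

lemma one_le_lam_mu_plus: "1 \<le> lam_mu_plus"
  using lam_gt_1 mu_plus_nonneg by (simp add: ge_one_powr_ge_zero)

lemma mu_block_le_mu_plus:
  assumes S: "S \<in> SS" and X: "X \<in> \<Omega>" and c: "c \<in> colourings S"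
    and f: "free_count V E X S c < card S"
  shows "real (mu_block V E X S c) \<le> mu_plus V E q SS * real (card S - free_count V E X S c)"
proof -
  let ?f = "free_count V E X S c"
  define A where "A = {real (mu_block V E X S c) / real (card S - ?f) | c.
                         c \<in> colourings S \<and> free_count V E X S c = ?f}"
  have "A = (\<lambda>c. real (mu_block V E X S c) / real (card S - ?f)) ` {c \<in> colourings S. free_count V E X S c = ?f}"
    unfolding A_def by blast
  then have A_fin: "finite A" using finite_block[OF S] by (simp add: finite_PiE)
  have in_A: "real (mu_block V E X S c) / real (card S - ?f) \<in> A" unfolding A_def using c by blast
  then have "real (mu_block V E X S c) / real (card S - ?f) \<le> Max A" using A_fin by simp
  also have "Max A = mu_plus_XSf V E q X S ?f"
    unfolding mu_plus_XSf_def A_def[symmetric] Let_def using in_A by auto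
  also have "\<dots> \<le> mu_plus V E q SS"
    unfolding mu_plus_def using finite_mu_plus_values S X f by (intro Max_ge) blast+
  finally show ?thesis using f by (simp add: field_simps)
qed

lemma weight_le_lam_mu_plus_power:
  assumes "S \<in> SS" "X \<in> \<Omega>" "c \<in> colourings S" "free_count V E X S c < card S"
  shows "weight X S c \<le> lam_mu_plus ^ (card S - free_count V E X S c)"
proof -
  have "weight X S c = lam powr real (mu_block V E X S c)"
    unfolding weight_def using lam_gt_1 by (simp add: powr_realpow)
  also have "\<dots> \<le> lam powr (mu_plus V E q SS * real (card S - free_count V E X S c))"
    using mu_block_le_mu_plus[OF assms] lam_gt_1 by (intro powr_mono) auto
  also have "\<dots> = lam_mu_plus ^ (card S - free_count V E X S c)"
    using lam_gt_1 by (simp add: powr_powr[symmetric] powr_realpow)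
  finally show ?thesis .
qed

lemma mu_block_le_if_colour_unused:
  assumes vS: "v \<notin> S" and XY: "\<forall>u. u \<noteq> v \<longrightarrow> X u = Y u" and unused: "X v \<notin> c ` S"
  shows "mu_block V E X S c \<le> mu_block V E Y S c"
  unfolding mu_block_def
proof (intro card_mono subsetI)
  fix e assume "e \<in> {e \<in> edges V E. monochromatic E (upd_conf X S c) e \<and> e \<inter> S \<noteq> {}}"
  then have e: "e \<in> edges V E" "e \<inter> S \<noteq> {}" and "monochromatic E (upd_conf X S c) e" by auto
  then obtain a b where ab: "e = {a, b}" "E a b" "upd_conf X S c a = upd_conf X S c b"
    unfolding monochromatic_def by blast
  have "a \<noteq> v" "b \<noteq> v" using ab e(2) vS unused by (fastforce simp: upd_conf_def image_iff)+
  then have "upd_conf Y S c a = upd_conf Y S c b"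
    using ab(3) XY[rule_format, of a] XY[rule_format, of b] by (auto simp: upd_conf_def split: if_splits)
  then show "e \<in> {e \<in> edges V E. monochromatic E (upd_conf Y S c) e \<and> e \<inter> S \<noteq> {}}"
    using e ab unfolding monochromatic_def by blast
qed (use finite_edges in simp)

lemma mu_block_eq_off_boundary:
  assumes vS: "v \<notin> S" and vB: "v \<notin> boundary V E S" and XY: "\<forall>u. u \<noteq> v \<longrightarrow> X u = Y u"
  shows "mu_block V E X S c = mu_block V E Y S c"
proof -
  have avoid: "a \<noteq> v" "b \<noteq> v" if "E a b" "{a, b} \<inter> S \<noteq> {}" for a b
    using that vS vB adj_in_V[OF that(1)] adj_sym[OF that(1)] unfolding boundary_def by auto
  have same: "upd_conf X S c a = upd_conf Y S c a" if "a \<noteq> v" for a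
    using XY that by (simp add: upd_conf_def)
  have "monochromatic E (upd_conf X S c) e \<longleftrightarrow> monochromatic E (upd_conf Y S c) e" if "e \<inter> S \<noteq> {}" for e
    unfolding monochromatic_def using that avoid same by metis
  then show ?thesis unfolding mu_block_def by (metis (lifting))
qed

lemma free_count_less:
  assumes "finite S" "v \<in> boundary V E S" "X v \<in> c ` S"
  shows "free_count V E X S c < card S"
proof -
  have "card (c ` S - X ` boundary V E S) < card (c ` S)" using assms by (intro psubset_card_mono) auto
  then show ?thesis using card_image_le[OF assms(1), of c] unfolding free_count_def by linarith
qed

text \<open>A colouring of \<open>S\<close> can be heavier at \<open>X\<close> than at \<open>Y\<close> only if it uses the colour \<open>X v\<close>,
  which occurs on the boundary and so is not free; its weight is then controlled by \<open>\<mu>\<^sup>+\<close>.\<close>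

lemma weight_excess_le:
  assumes S: "S \<in> SS" and X: "X \<in> \<Omega>" and vB: "v \<in> boundary V E S"
    and XY: "\<forall>u. u \<noteq> v \<longrightarrow> X u = Y u" and c: "c \<in> colourings S"
  shows "max 0 (weight X S c - weight Y S c)
           \<le> (if X v \<in> c ` S then lam_mu_plus ^ (card S - free_count V E X S c) else 0)"
proof (cases "X v \<in> c ` S")
  case True
  then have "free_count V E X S c < card S" by (rule free_count_less[OF finite_block[OF S] vB])
  then show ?thesis
    using True weight_le_lam_mu_plus_power[OF S X c] weight_pos[of Y S c] by simp
next
  case False
  have vS: "v \<notin> S" using vB unfolding boundary_def by auto
  have "weight X S c \<le> weight Y S c"
    unfolding weight_def using lam_gt_1 mu_block_le_if_colour_unused[OF vS XY False]
    by (intro power_increasing) auto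
  then show ?thesis using False by simp
qed

lemma sum_weight_excess_le:
  assumes S: "S \<in> SS" and X: "X \<in> \<Omega>" and vB: "v \<in> boundary V E S"
    and XY: "\<forall>u. u \<noteq> v \<longrightarrow> X u = Y u"
  shows "(\<Sum>c\<in>colourings S. max 0 (weight X S c - weight Y S c)) \<le> free_colour_sum S"
proof -
  let ?k = "card S" and ?d = "card (boundary V E S)" and ?fc = "\<lambda>c. free_count V E X S c"
  define A where "A = {c \<in> colourings S. X v \<in> c ` S}"
  have S_fin: "finite S" by (rule finite_block[OF S])
  have A_fin: "finite A" unfolding A_def using S_fin by (simp add: finite_PiE)
  have fc_less: "?fc c < ?k" if "c \<in> A" for c
    using free_count_less[OF S_fin vB] that unfolding A_def by blast
  have "(\<Sum>c\<in>colourings S. max 0 (weight X S c - weight Y S c))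
      \<le> (\<Sum>c\<in>colourings S. if c \<in> A then lam_mu_plus ^ (?k - ?fc c) else 0)"
    using weight_excess_le[OF S X vB XY] unfolding A_def by (intro sum_mono) auto
  also have "\<dots> = (\<Sum>c\<in>A. lam_mu_plus ^ (?k - ?fc c))"
    unfolding A_def using S_fin by (simp add: sum.inter_filter[symmetric] finite_PiE)
  also have "\<dots> = (\<Sum>f<?k. \<Sum>c\<in>{c \<in> A. ?fc c = f}. lam_mu_plus ^ (?k - ?fc c))"
    by (rule sum.group[symmetric]) (use A_fin fc_less in auto)
  also have "\<dots> = (\<Sum>f<?k. real (card {c \<in> A. ?fc c = f}) * lam_mu_plus ^ (?k - f))"
    by (rule sum.cong[OF refl]) simp
  also have "\<dots> \<le> (\<Sum>f<?k. real (q ^ f * (f + 1) ^ ?k * ?d ^ (?k - f)) * lam_mu_plus ^ (?k - f))"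
  proof (intro sum_mono mult_right_mono)
    fix f assume f: "f \<in> {..<?k}"
    have "card {c \<in> A. ?fc c = f} \<le> card {c \<in> colourings S. card (c ` S - X ` boundary V E S) = f}"
      using S_fin by (intro card_mono) (auto simp: A_def free_count_def finite_PiE)
    also have "\<dots> \<le> q ^ f * (f + 1) ^ ?k * ?d ^ (?k - f)"
    proof (rule card_colourings_free_colours_le[OF S_fin])
      show "1 \<le> ?d" using vB finite_boundary by (metis One_nat_def Suc_leI card_gt_0_iff empty_iff)
    qed (use f finite_boundary card_image_le in auto)
    finally show "real (card {c \<in> A. ?fc c = f}) \<le> real (q ^ f * (f + 1) ^ ?k * ?d ^ (?k - f))"
      by (simp only: of_nat_le_iff)
  qed (use one_le_lam_mu_plus in auto)
  also have "\<dots> = free_colour_sum S" by (simp add: mult_ac add.commute)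
  finally show ?thesis .
qed

lemma heat_bath_excess_le:
  assumes S: "finite S" and Z: "weight_sum B S \<le> weight_sum A S"
  shows "max 0 (heat_bath A S c - heat_bath B S c) \<le> max 0 (weight A S c - weight B S c) / real q ^ card S"
proof -
  have "heat_bath A S c - heat_bath B S c \<le> (weight A S c - weight B S c) / weight_sum B S"
    unfolding heat_bath_def using weight_pos[of A S c] weight_sum_pos[OF S] Z
    by (simp add: diff_divide_distrib divide_left_mono)
  also have "\<dots> \<le> max 0 (weight A S c - weight B S c) / weight_sum B S"
    using weight_sum_pos[OF S, of B] by (intro divide_right_mono) auto
  finally have "max 0 (heat_bath A S c - heat_bath B S c) \<le> max 0 (weight A S c - weight B S c) / weight_sum B S"
    using weight_sum_pos[OF S, of B] by simp
  also have "\<dots> \<le> max 0 (weight A S c - weight B S c) / real q ^ card S"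
  proof (rule divide_left_mono)
    show "real q ^ card S \<le> weight_sum B S" by (rule weight_sum_ge[OF S])
    show "0 < weight_sum B S * real q ^ card S" using weight_sum_pos[OF S, of B] q_pos by simp
  qed simp
  finally show ?thesis .
qed

text \<open>The two heat-bath distributions have equal mass, so the excess may be measured from the
  configuration with the larger partition function.\<close>

lemma sum_heat_bath_excess_le:
  assumes S: "S \<in> SS" and X: "X \<in> \<Omega>" and Y: "Y \<in> \<Omega>" and vB: "v \<in> boundary V E S"
    and XY: "\<forall>u. u \<noteq> v \<longrightarrow> X u = Y u"
  shows "(\<Sum>c\<in>colourings S. max 0 (heat_bath X S c - heat_bath Y S c))
           \<le> min 1 (free_colour_sum S / real q ^ card S)"
proof -
  have S_fin: "finite S" by (rule finite_block[OF S])
  have excess_le: "(\<Sum>c\<in>colourings S. max 0 (heat_bath A S c - heat_bath B S c))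
      \<le> free_colour_sum S / real q ^ card S"
    if A: "A \<in> \<Omega>" and AB: "\<forall>u. u \<noteq> v \<longrightarrow> A u = B u" and Z: "weight_sum B S \<le> weight_sum A S" for A B
  proof -
    have "(\<Sum>c\<in>colourings S. max 0 (heat_bath A S c - heat_bath B S c))
        \<le> (\<Sum>c\<in>colourings S. max 0 (weight A S c - weight B S c)) / real q ^ card S"
      using heat_bath_excess_le[OF S_fin Z] by (simp add: sum_divide_distrib sum_mono)
    also have "\<dots> \<le> free_colour_sum S / real q ^ card S"
      using sum_weight_excess_le[OF S A vB AB] q_pos by (intro divide_right_mono) auto
    finally show ?thesis .
  qed
  have mass: "sum (heat_bath X S) (colourings S) = sum (heat_bath Y S) (colourings S)"
    using sum_heat_bath[OF S_fin] by simp
  have "(\<Sum>c\<in>colourings S. max 0 (heat_bath X S c - heat_bath Y S c)) \<le> free_colour_sum S / real q ^ card S"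
  proof (cases "weight_sum Y S \<le> weight_sum X S")
    case True
    then show ?thesis using excess_le[OF X XY] by simp
  next
    case False
    have "\<forall>u. u \<noteq> v \<longrightarrow> Y u = X u" using XY by simp
    then show ?thesis
      using excess_le[OF Y _] False sum_max_0_diff_swap[OF mass] by simp
  qed
  moreover have "(\<Sum>c\<in>colourings S. max 0 (heat_bath X S c - heat_bath Y S c)) \<le> 1"
    using sum_heat_bath[OF S_fin, of X] heat_bath_nonneg[OF S_fin] heat_bath_nonneg[OF S_fin]
    by (smt (verit, best) sum_mono)
  ultimately show ?thesis by simp
qed

text \<open>Update both configurations with the same colouring of \<open>S\<close>: the resulting pair still differs
  only at \<open>v\<close>, and what remains is the change of the heat-bath distribution itself, which can
  only occur when \<open>v\<close> lies on the boundary of \<open>S\<close>.\<close>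

lemma block_mean_diff_le:
  fixes L :: real
  assumes S: "S \<in> SS" and X: "X \<in> \<Omega>" and Y: "Y \<in> \<Omega>" and v: "v \<in> V" "v \<notin> S"
    and XY: "\<forall>u. u \<noteq> v \<longrightarrow> X u = Y u" and g: "hamming_lipschitz L g" and L: "0 \<le> L"
  shows "block_mean g X S - block_mean g Y S
           \<le> L + (if v \<in> boundary V E S then L * card S * min 1 (free_colour_sum S / real q ^ card S) else 0)"
proof -
  have S_fin: "finite S" and S_sub: "S \<subseteq> V" using finite_block[OF S] block_subset[OF S] .
  let ?h = "\<lambda>c. g (upd_conf Y S c)"
  have split: "block_mean g X S - block_mean g Y S
      = (\<Sum>c\<in>colourings S. heat_bath X S c * (g (upd_conf X S c) - ?h c))
        + (\<Sum>c\<in>colourings S. (heat_bath X S c - heat_bath Y S c) * ?h c)"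
    unfolding block_mean_def by (simp add: algebra_simps sum_subtractf sum.distrib)
  have "(\<Sum>c\<in>colourings S. heat_bath X S c * (g (upd_conf X S c) - ?h c))
      \<le> (\<Sum>c\<in>colourings S. heat_bath X S c * L)"
  proof (intro sum_mono mult_left_mono)
    fix c assume c: "c \<in> colourings S"
    have "\<forall>u. u \<noteq> v \<longrightarrow> upd_conf X S c u = upd_conf Y S c u" using XY by (simp add: upd_conf_def)
    then show "g (upd_conf X S c) - ?h c \<le> L"
      using g upd_conf_in_configs[OF X S_sub c] upd_conf_in_configs[OF Y S_sub c] v(1)
      unfolding hamming_lipschitz_def by fastforce
  qed (rule heat_bath_nonneg[OF S_fin])
  also have "\<dots> = L" using sum_heat_bath[OF S_fin] by (simp add: sum_distrib_right[symmetric])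
  finally have coupled: "(\<Sum>c\<in>colourings S. heat_bath X S c * (g (upd_conf X S c) - ?h c)) \<le> L" .
  show ?thesis
  proof (cases "v \<in> boundary V E S")
    case False
    have "heat_bath X S c = heat_bath Y S c" for c
      using mu_block_eq_off_boundary[OF v(2) False XY]
      by (simp add: heat_bath_def weight_sum_def weight_def)
    then show ?thesis using split coupled False by simp
  next
    case True
    have osc: "?h c - ?h c' \<le> card S * L" if "c \<in> colourings S" "c' \<in> colourings S" for c c'
    proof -
      have "\<bar>?h c - ?h c'\<bar> \<le> card S * L"
        by (rule hamming_lipschitz_diff_le_card[OF g L upd_conf_in_configs[OF Y S_sub that(1)]
              upd_conf_in_configs[OF Y S_sub that(2)] S_fin]) (auto simp: upd_conf_def)
      then show ?thesis by simp
    qed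
    have "(\<Sum>c\<in>colourings S. (heat_bath X S c - heat_bath Y S c) * ?h c)
        \<le> card S * L * (\<Sum>c\<in>colourings S. max 0 (heat_bath X S c - heat_bath Y S c))"
      using sum_heat_bath[OF S_fin] osc
      by (intro sum_diff_mult_le_oscillation) (simp_all add: S_fin finite_PiE colourings_nonempty)
    also have "\<dots> \<le> card S * L * min 1 (free_colour_sum S / real q ^ card S)"
      using sum_heat_bath_excess_le[OF S X Y True XY] L by (intro mult_left_mono) auto
    finally show ?thesis using split coupled True by (simp add: mult_ac)
  qed
qed

end

section \<open>Contraction when there are many colours\<close>

locale block_dynamics_many_colours = block_dynamics +
  assumes V_not_block: "V \<notin> SS"
    and psi_v_pos: "\<forall>v\<in>V. 0 < psi_v SS psi v"
    and Psi_pos: "0 < Psi_ratio V E SS psi"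
    and q_large: "(2 * real (max_block SS)) ^ (max_block SS + 1) * real (bd_plus V E SS)
                    * Psi_ratio V E SS psi * lam_mu_plus \<le> real q"
begin

abbreviation "\<Psi> \<equiv> Psi_ratio V E SS psi"

lemma psi_v_eq_sum_if: "psi_v SS psi v = (\<Sum>S\<in>SS. if v \<in> S then psi S else 0)"
  unfolding psi_v_def using finite_blocks by (simp add: sum.inter_filter)

lemma psi_bd_eq_sum_if: "psi_bd V E SS psi v = (\<Sum>S\<in>SS. if v \<in> boundary V E S then psi S else 0)"
  unfolding psi_bd_def using finite_blocks by (simp add: sum.inter_filter)

lemma psi_min_le: "v \<in> V \<Longrightarrow> psi_min V SS psi \<le> psi_v SS psi v"
  unfolding psi_min_def using finite_V by (intro Min_le) auto

lemma boundary_term_le: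
  assumes S: "S \<in> SS" and v: "v \<in> boundary V E S"
  shows "real (card S) * \<Psi> * min 1 (free_colour_sum S / real q ^ card S) \<le> 1 / 4"
proof (rule free_colour_sum_le[OF _ _ _ _ one_le_lam_mu_plus Psi_pos q_large])
  have "S \<noteq> {}" using v unfolding boundary_def by auto
  then show k: "1 \<le> card S" using finite_block[OF S] by (simp add: Suc_le_eq card_gt_0_iff)
  show d: "1 \<le> card (boundary V E S)"
    using v finite_boundary by (metis One_nat_def Suc_leI card_gt_0_iff empty_iff)
  show "card S \<le> max_block SS" unfolding max_block_def using finite_blocks S by simp
  have "card (boundary V E S) \<le> card (boundary V E S) ^ min (card S) (card (boundary V E S))"
    using k d by (intro self_le_power) auto
  also have "\<dots> \<le> bd_plus V E SS" unfolding bd_plus_def using finite_blocks S by (intro Max_ge) auto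
  finally show "card (boundary V E S) \<le> bd_plus V E SS" .
qed

lemma psi_bd_le: "v \<in> V \<Longrightarrow> psi_bd V E SS psi v \<le> \<Psi> * psi_v SS psi v"
proof -
  assume v: "v \<in> V"
  have "psi_bd V E SS psi v / psi_v SS psi v \<le> \<Psi>"
    unfolding Psi_ratio_def using finite_V v by (intro Max_ge) auto
  then show ?thesis using psi_v_pos v by (simp add: divide_le_eq)
qed

text \<open>Blocks containing \<open>v\<close> erase the discrepancy, which happens with probability \<open>\<psi>(v)\<close>; blocks
  with \<open>v\<close> on their boundary, of total probability at most \<open>\<Psi> \<psi>(v)\<close>, each cost at most an extra
  \<open>L/(4\<Psi>)\<close> by the choice of \<open>q\<close>.\<close>

lemma markov_op_diff_le:
  fixes L :: real
  assumes X: "X \<in> \<Omega>" and Y: "Y \<in> \<Omega>" and v: "v \<in> V" and XY: "\<forall>u. u \<noteq> v \<longrightarrow> X u = Y u"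
    and g: "hamming_lipschitz L g" and L: "0 \<le> L"
  shows "markov_op g X - markov_op g Y \<le> (1 - 3 / 4 * psi_min V SS psi) * L"
proof -
  define bound where
    "bound S = (if v \<in> S then 0 else L + (if v \<in> boundary V E S then L / (4 * \<Psi>) else 0))" for S
  have "markov_op g X - markov_op g Y = (\<Sum>S\<in>SS. psi S * (block_mean g X S - block_mean g Y S))"
    by (simp add: markov_op_eq_block_mean[OF X] markov_op_eq_block_mean[OF Y] sum_subtractf right_diff_distrib)
  also have "\<dots> \<le> (\<Sum>S\<in>SS. psi S * bound S)"
  proof (intro sum_mono mult_left_mono)
    fix S assume S: "S \<in> SS"
    show "0 \<le> psi S" by (rule psi_nonneg[OF S])
    show "block_mean g X S - block_mean g Y S \<le> bound S"
    proof (cases "v \<in> S")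
      case True
      then have "agree_off S X Y" using XY by auto
      then show ?thesis using True block_mean_agree_off[of S X Y g] unfolding bound_def by simp
    next
      case False
      have "L * real (card S) * min 1 (free_colour_sum S / real q ^ card S) \<le> L / (4 * \<Psi>)"
        if "v \<in> boundary V E S"
        using mult_left_mono[OF boundary_term_le[OF S that] L] Psi_pos
        by (simp add: field_simps)
      then show ?thesis
        using block_mean_diff_le[OF S X Y v False XY g L] False unfolding bound_def
        by (auto split: if_splits)
    qed
  qed
  also have "\<dots> = L * (1 - psi_v SS psi v) + L / (4 * \<Psi>) * psi_bd V E SS psi v"
  proof -
    have "psi S * bound S = L * (psi S - (if v \<in> S then psi S else 0))
                            + L / (4 * \<Psi>) * (if v \<in> boundary V E S then psi S else 0)" for S
      unfolding bound_def boundary_def by (auto simp: algebra_simps)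
    then show ?thesis
      by (simp add: psi_v_eq_sum_if psi_bd_eq_sum_if sum.distrib sum_distrib_left[symmetric]
          sum_divide_distrib[symmetric] sum_subtractf sum_psi)
  qed
  also have "\<dots> \<le> L * (1 - psi_v SS psi v) + L / (4 * \<Psi>) * (\<Psi> * psi_v SS psi v)"
    using psi_bd_le[OF v] L Psi_pos by (intro add_left_mono mult_left_mono) auto
  also have "\<dots> = L * (1 - 3 / 4 * psi_v SS psi v)" using Psi_pos by (simp add: algebra_simps)
  also have "\<dots> \<le> L * (1 - 3 / 4 * psi_min V SS psi)" using psi_min_le[OF v] L by (intro mult_left_mono) auto
  finally show ?thesis by (simp add: mult.commute)
qed

lemma hamming_lipschitz_markov_op:
  assumes "0 \<le> L" "hamming_lipschitz L g"
  shows "hamming_lipschitz ((1 - 3 / 4 * psi_min V SS psi) * L) (markov_op g)"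
  unfolding hamming_lipschitz_def
proof (intro ballI impI)
  fix X Y v assume X: "X \<in> \<Omega>" and Y: "Y \<in> \<Omega>" and v: "v \<in> V" and XY: "\<forall>u. u \<noteq> v \<longrightarrow> X u = Y u"
  then have YX: "\<forall>u. u \<noteq> v \<longrightarrow> Y u = X u" by auto
  show "\<bar>markov_op g X - markov_op g Y\<bar> \<le> (1 - 3 / 4 * psi_min V SS psi) * L"
    using markov_op_diff_le[OF X Y v XY assms(2,1)] markov_op_diff_le[OF Y X v YX assms(2,1)] by linarith
qed

section \<open>The mixing time bound\<close>

lemma psi_min_pos: "V \<noteq> {} \<Longrightarrow> 0 < psi_min V SS psi"
  unfolding psi_min_def using finite_V psi_v_pos by (subst Min_gr_iff) auto

text \<open>\<open>\<Sum>\<^sub>v \<psi>(v)\<close> is the expected size of the chosen block, and no block is all of \<open>V\<close>.\<close>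

lemma card_mult_psi_min_le: "real (card V) * psi_min V SS psi \<le> real (card V) - 1"
proof -
  have "real (card V) * psi_min V SS psi \<le> (\<Sum>v\<in>V. psi_v SS psi v)"
    using sum_mono[OF psi_min_le] by simp
  also have "\<dots> = (\<Sum>S\<in>SS. \<Sum>v\<in>V. if v \<in> S then psi S else 0)"
    unfolding psi_v_eq_sum_if by (rule sum.swap)
  also have "\<dots> = (\<Sum>S\<in>SS. psi S * real (card S))"
  proof (rule sum.cong[OF refl])
    fix S assume "S \<in> SS"
    then have "V \<inter> S = S" using block_subset by blast
    then show "(\<Sum>v\<in>V. if v \<in> S then psi S else 0) = psi S * real (card S)"
      using sum.inter_restrict[OF finite_V, of "\<lambda>_. psi S" S] by (simp add: mult.commute)
  qed
  also have "\<dots> \<le> (\<Sum>S\<in>SS. psi S * (real (card V) - 1))"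
  proof (intro sum_mono mult_left_mono)
    fix S assume S: "S \<in> SS"
    have "S \<subset> V" using block_subset[OF S] S V_not_block by auto
    then have "card S < card V" using finite_V by (rule psubset_card_mono[rotated])
    then show "real (card S) \<le> real (card V) - 1" by linarith
  qed (rule psi_nonneg)
  also have "\<dots> = real (card V) - 1" by (simp add: sum_distrib_right[symmetric] sum_psi)
  finally show ?thesis .
qed

lemma tv_dist_le_eps:
  assumes V: "V \<noteq> {}" and eps: "0 < eps" "eps < 1" and x: "x \<in> \<Omega>"
  shows "tv_dist \<Omega> (mat_pow \<Omega> BD (nat \<lfloor>2 / psi_min V SS psi * ln (real (card V) / eps)\<rfloor>) x) \<pi> \<le> eps"
proof -
  have p: "0 < psi_min V SS psi" by (rule psi_min_pos[OF V])
  have "0 < real (card V) * psi_min V SS psi" using p V finite_V by (simp add: card_gt_0_iff)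
  then have n: "2 \<le> card V" using card_mult_psi_min_le by linarith
  have "real (card V) * psi_min V SS psi \<le> real (card V) * 1" using card_mult_psi_min_le by simp
  then have "psi_min V SS psi \<le> 1" using n by (simp add: mult_le_cancel_left_pos)
  then have "tv_dist \<Omega> (mat_pow \<Omega> BD (nat \<lfloor>2 / psi_min V SS psi * ln (real (card V) / eps)\<rfloor>) x) \<pi>
      \<le> card V * (1 - 3 / 4 * psi_min V SS psi) ^ nat \<lfloor>2 / psi_min V SS psi * ln (real (card V) / eps)\<rfloor>"
    by (intro tv_dist_mat_pow_le[OF hamming_lipschitz_markov_op _ x]) auto
  also have "\<dots> \<le> eps" by (rule decay_at_mixing_time_le[OF n p card_mult_psi_min_le eps])
  finally show ?thesis .
qed

lemma mixing_time_bound: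
  assumes V: "V \<noteq> {}" and eps: "0 < eps" "eps < 1"
  shows "(\<forall>x\<in>\<Omega>. \<exists>t. tv_dist \<Omega> (mat_pow \<Omega> BD t x) \<pi> \<le> eps)
       \<and> real (mixing_time \<Omega> BD \<pi> eps) \<le> 2 / psi_min V SS psi * ln (real (card V) / eps)"
proof -
  define T where "T = nat \<lfloor>2 / psi_min V SS psi * ln (real (card V) / eps)\<rfloor>"
  have tv: "\<forall>x\<in>\<Omega>. tv_dist \<Omega> (mat_pow \<Omega> BD T x) \<pi> \<le> eps"
    unfolding T_def using tv_dist_le_eps[OF V eps] by blast
  have "1 \<le> card V" using V finite_V by (simp add: Suc_le_eq card_gt_0_iff)
  then have "1 \<le> real (card V) / eps" using eps by (simp add: field_simps)
  then have "0 \<le> ln (real (card V) / eps)" by simp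
  then have "real T \<le> 2 / psi_min V SS psi * ln (real (card V) / eps)"
    unfolding T_def using psi_min_pos[OF V] by simp
  moreover have "mixing_time \<Omega> BD \<pi> eps \<le> T" by (rule mixing_time_le[OF finite_configs configs_nonempty tv])
  ultimately show ?thesis using tv by force
qed

end

lemma boundary_nonempty_if_path:
  assumes "simple_graph V E" and "E\<^sup>*\<^sup>* a b" and "a \<in> S" and "b \<notin> S"
  shows "boundary V E S \<noteq> {}"
  using assms(2,4)
proof (induction rule: rtranclp_induct)
  case (step y z)
  show ?case
  proof (cases "y \<in> S")
    case True
    then have "z \<in> boundary V E S"
      using step assms(1) unfolding simple_graph_def boundary_def by auto
    then show ?thesis by blast
  qed (use step.IH in blast)
qed (use assms(3) in simp)

lemma exists_block_with_boundary:
  assumes simple: "simple_graph V E" and conn: "connected_graph V E"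
    and blocks: "block_system V SS" "V \<notin> SS" and psi_v: "\<forall>v\<in>V. 0 < psi_v SS psi v"
  obtains S where "S \<in> SS" "0 < psi S" "boundary V E S \<noteq> {}"
proof -
  obtain w where w: "w \<in> V" using conn unfolding connected_graph_def by blast
  have "\<exists>S\<in>{S\<in>SS. w \<in> S}. 0 < psi S"
  proof (rule ccontr)
    assume "\<not> (\<exists>S\<in>{S\<in>SS. w \<in> S}. 0 < psi S)"
    then have "psi_v SS psi w \<le> 0" unfolding psi_v_def by (intro sum_nonpos) auto
    then show False using psi_v w by auto
  qed
  then obtain S where S: "S \<in> SS" "w \<in> S" "0 < psi S" by blast
  have "S \<subseteq> V" "S \<noteq> V" using S(1) blocks unfolding block_system_def by auto
  then obtain z where z: "z \<in> V" "z \<notin> S" by blast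
  have "E\<^sup>*\<^sup>* w z" using conn w z unfolding connected_graph_def by blast
  then show ?thesis using that S boundary_nonempty_if_path[OF simple _ S(2) z(2)] by blast
qed

lemma Psi_ratio_pos:
  assumes "finite V" "prob_on SS psi" "\<forall>v\<in>V. 0 < psi_v SS psi v"
    and S: "S \<in> SS" "0 < psi S" and u: "u \<in> boundary V E S"
  shows "0 < Psi_ratio V E SS psi"
proof -
  have u_V: "u \<in> V" using u unfolding boundary_def by auto
  have "psi S \<le> psi_bd V E SS psi u"
    unfolding psi_bd_def using assms by (intro member_le_sum) (auto simp: prob_on_def)
  then have "0 < psi_bd V E SS psi u / psi_v SS psi u" using S assms(3) u_V by simp
  also have "\<dots> \<le> Psi_ratio V E SS psi"
    unfolding Psi_ratio_def using assms(1) u_V by (intro Max_ge) auto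
  finally show ?thesis .
qed

lemma one_le_max_block:
  assumes "finite SS" "S \<in> SS" "finite S" "S \<noteq> {}"
  shows "1 \<le> max_block SS"
proof -
  have "1 \<le> card S" using assms(3,4) by (simp add: Suc_le_eq card_gt_0_iff)
  also have "\<dots> \<le> max_block SS" unfolding max_block_def using assms(1,2) by simp
  finally show ?thesis .
qed

lemma one_le_bd_plus:
  assumes "finite SS" "S \<in> SS" "finite (boundary V E S)" "boundary V E S \<noteq> {}"
  shows "1 \<le> bd_plus V E SS"
proof -
  have "1 \<le> card (boundary V E S) ^ min (card S) (card (boundary V E S))"
    using assms(3,4) by (simp add: Suc_le_eq card_gt_0_iff)
  also have "\<dots> \<le> bd_plus V E SS" unfolding bd_plus_def using assms(1,2) by (intro Max_ge) auto
  finally show ?thesis .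
qed

theorem theorem2p3:
  fixes V :: "'v set" and E :: "'v \<Rightarrow> 'v \<Rightarrow> bool" and q :: nat and lam :: real
    and \<S> :: "'v set set" and \<psi> :: "'v set \<Rightarrow> real" and eps :: real
  assumes "simple_graph V E" and "connected_graph V E"
    and "block_system V \<S>" and "V \<notin> \<S>"
    and "prob_on \<S> \<psi>" and "\<forall>v\<in>V. psi_v \<S> \<psi> v > 0"
    and "lam > 1"
    and "real q \<ge> (2 * real (max_block \<S>)) ^ (max_block \<S> + 1) * real (bd_plus V E \<S>)
                    * Psi_ratio V E \<S> \<psi> * lam powr (mu_plus V E q \<S>)"
    and "0 < eps" and "eps < 1"
  shows "(\<forall>x\<in>configs V q. \<exists>t. tv_dist (configs V q) (mat_pow (configs V q) (block_dyn V E q lam \<S> \<psi>) t x)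
                                  (gibbs V E q lam) \<le> eps)
       \<and> real (mixing_time (configs V q) (block_dyn V E q lam \<S> \<psi>) (gibbs V E q lam) eps)
           \<le> 2 / psi_min V \<S> \<psi> * ln (real (card V) / eps)"
proof -
  have V: "finite V" "V \<noteq> {}" using assms(1,2) by (simp_all add: simple_graph_def connected_graph_def)
  have \<S>: "finite \<S>" "\<forall>S\<in>\<S>. S \<subseteq> V" using assms(3,5) by (simp_all add: prob_on_def block_system_def)
  obtain S where S: "S \<in> \<S>" "0 < \<psi> S" "boundary V E S \<noteq> {}"
    using exists_block_with_boundary[OF assms(1-4,6)] .
  then obtain u where u: "u \<in> boundary V E S" by blast
  have Psi: "0 < Psi_ratio V E \<S> \<psi>" by (rule Psi_ratio_pos[OF V(1) assms(5,6) S(1,2) u])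
  have "S \<noteq> {}" using u unfolding boundary_def by auto
  moreover have "finite S" using V(1) \<S>(2) S(1) finite_subset by blast
  moreover have "finite (boundary V E S)" using V(1) unfolding boundary_def by simp
  ultimately have "1 \<le> max_block \<S>" "1 \<le> bd_plus V E \<S>"
    using one_le_max_block[OF \<S>(1) S(1)] one_le_bd_plus[OF \<S>(1) S(1) _ S(3)] by auto
  then have "0 < (2 * real (max_block \<S>)) ^ (max_block \<S> + 1) * real (bd_plus V E \<S>)
                    * Psi_ratio V E \<S> \<psi> * lam powr (mu_plus V E q \<S>)"
    using Psi assms(7) by simp
  with assms(8) have "0 < q" by (metis of_nat_0_less_iff order.strict_trans2)
  interpret block_dynamics_many_colours V E q lam \<S> \<psi>
    using assms Psi \<open>0 < q\<close> by unfold_locales simp_all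
  show ?thesis using mixing_time_bound[OF V(2) assms(9,10)] .
qed

end
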